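(* Let $M$ be a finite non-negative Borel measure on $(-1,1)$. Let $A\colon\ell^2(\mathbb Z_+)\to L^2((-1,1);dM)$ be the operator with domain $\mathcal D$ given by $(Ag)(\mu)=\sum_{n=0}^\infty g_n\mu^n$. Let $A_{\max}$ be the operator defined by $(A_{\max}g)(\mu)=\sum_{n=0}^\infty g_n\mu^n$, $\mu\in(-1,1)$, on the domain of all $g\in\ell^2(\mathbb Z_+)$ for which this function belongs to $L^2((-1,1);dM)$. Then $A$ is closable and its closure satisfies $A^{**}=A_{\max}$.
   Context: $\ell^2(\mathbb Z_+)$ is the Hilbert space of square-summable complex sequences $g=(g_0,g_1,\ldots)$, and $\mathcal D$ is the dense subspace of sequences with finitely many non-zero entries. For $g\in\ell^2(\mathbb Z_+)$ and $\mu\in(-1,1)$ the series $\sum g_n\mu^n$ converges absolutely. *)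

theory Defs
  imports "HOL-Analysis.Analysis"
begin

definition l2seq :: "(nat \<Rightarrow> complex) \<Rightarrow> bool" where
  "l2seq g \<longleftrightarrow> summable (\<lambda>n. (norm (g n))^2)"

text \<open>The dense subspace D: finitely supported sequences.\<close>
definition finsupp_seq :: "(nat \<Rightarrow> complex) \<Rightarrow> bool" where
  "finsupp_seq g \<longleftrightarrow> finite {n. g n \<noteq> 0}"

definition l2dist2 :: "(nat \<Rightarrow> complex) \<Rightarrow> (nat \<Rightarrow> complex) \<Rightarrow> real" where
  "l2dist2 g h = (\<Sum>n. (norm (g n - h n))^2)"

definition pseries :: "(nat \<Rightarrow> complex) \<Rightarrow> real \<Rightarrow> complex" where
  "pseries g \<mu> = (\<Sum>n. g n * (complex_of_real \<mu>) ^ n)"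

text \<open>Membership in L^2(M) (as a function; elements of L^2 are a.e.-classes).\<close>
definition L2fun :: "real measure \<Rightarrow> (real \<Rightarrow> complex) \<Rightarrow> bool" where
  "L2fun M f \<longleftrightarrow> f \<in> borel_measurable M \<and> integrable M (\<lambda>x. (norm (f x))^2)"

definition L2dist2 :: "real measure \<Rightarrow> (real \<Rightarrow> complex) \<Rightarrow> (real \<Rightarrow> complex) \<Rightarrow> ennreal" where
  "L2dist2 M f h = (\<integral>\<^sup>+ x. ennreal ((norm (f x - h x))^2) \<partial>M)"

definition in_graph_closure_A :: "real measure \<Rightarrow> (nat \<Rightarrow> complex) \<Rightarrow> (real \<Rightarrow> complex) \<Rightarrow> bool" where
  "in_graph_closure_A M g f \<longleftrightarrow>
     (\<exists>G :: nat \<Rightarrow> nat \<Rightarrow> complex. (\<forall>k. finsupp_seq (G k)) \<and>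
        (\<lambda>k. l2dist2 (G k) g) \<longlonglongrightarrow> 0 \<and>
        (\<lambda>k. L2dist2 M (pseries (G k)) f) \<longlonglongrightarrow> 0)"

text \<open>A is closable: the closure of its graph is the graph of an operator.\<close>
definition closable_A :: "real measure \<Rightarrow> bool" where
  "closable_A M \<longleftrightarrow>
     (\<forall>g f1 f2. l2seq g \<and> L2fun M f1 \<and> L2fun M f2 \<and>
        in_graph_closure_A M g f1 \<and> in_graph_closure_A M g f2 \<longrightarrow> (AE x in M. f1 x = f2 x))"

definition dom_Amax :: "real measure \<Rightarrow> (nat \<Rightarrow> complex) \<Rightarrow> bool" where
  "dom_Amax M g \<longleftrightarrow> l2seq g \<and> L2fun M (pseries g)"

end

theory Submission
  imports Defs
begin

text \<open>
  Since \<open>\<bar>\<Sum>n. d n * t ^ n\<bar>\<^sup>2 \<le> (\<Sum>n. \<bar>d n\<bar>\<^sup>2) / (1 - t\<^sup>2)\<close>, convergence in l^2 implies pointwise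
  convergence of the power series, so by Fatou's lemma every limit point \<open>(g, f)\<close> of the graph
  of A has \<open>f = pseries g\<close> almost everywhere; this gives closability and one inclusion.

  Conversely, let g be in the domain of A_max. Plain truncations of g need not converge in
  L^2(M), since M may charge the neighbourhoods of the endpoints. Instead we use the finitely
  supported sequences whose power series is \<open>P\<^sub>K t * (1 - B\<^sub>N t)\<close>, where \<open>P\<^sub>K\<close> is the K-th
  partial sum and \<open>B\<^sub>N t = (\<Sum>j=1..N. t ^ (2 * j)) / N\<close>. As \<open>1 - B\<^sub>N t \<le> N * (1 - t\<^sup>2)\<close>, the
  damping factor cancels the blow-up of the tail bound above, leaving an error of N times the
  l^2-tail of g beyond K, while \<open>B\<^sub>N * pseries g \<rightarrow> 0\<close> in L^2(M) by dominated convergence. In l^2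
  the correction term has squared norm \<open>O(L / N)\<close> plus the tail of g beyond L, so choosing L,
  then N, then K yields the approximating sequence.
\<close>

section \<open>Square-summable power series\<close>

lemma norm_add_power2_le:
  fixes u v :: "'a::real_normed_vector"
  shows "(norm (u + v))\<^sup>2 \<le> 2 * (norm u)\<^sup>2 + 2 * (norm v)\<^sup>2"
proof -
  have "(norm (u + v))\<^sup>2 \<le> (norm u + norm v)\<^sup>2"
    by (intro power_mono norm_triangle_ineq) auto
  also have "\<dots> \<le> 2 * (norm u)\<^sup>2 + 2 * (norm v)\<^sup>2"
    using sum_squares_bound[of "norm u" "norm v"] by (simp add: power2_sum)
  finally show ?thesis .
qed

lemma norm_sum_mult_power2_le:
  fixes u v :: "'a \<Rightarrow> 'b::real_normed_div_algebra"
  shows "(norm (\<Sum>i\<in>A. u i * v i))\<^sup>2 \<le> (\<Sum>i\<in>A. (norm (u i))\<^sup>2) * (\<Sum>i\<in>A. (norm (v i))\<^sup>2)"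
proof -
  have "norm (\<Sum>i\<in>A. u i * v i) \<le> (\<Sum>i\<in>A. norm (u i) * norm (v i))"
    by (rule order_trans[OF norm_sum]) (simp add: norm_mult)
  then have "(norm (\<Sum>i\<in>A. u i * v i))\<^sup>2 \<le> (\<Sum>i\<in>A. norm (u i) * norm (v i))\<^sup>2"
    by (intro power_mono) auto
  also have "\<dots> \<le> (\<Sum>i\<in>A. (norm (u i))\<^sup>2) * (\<Sum>i\<in>A. (norm (v i))\<^sup>2)"
    by (rule Cauchy_Schwarz_ineq_sum)
  finally show ?thesis .
qed

lemma norm_sum_power2_le_card:
  fixes w :: "'a \<Rightarrow> 'b::real_normed_vector"
  shows "(norm (\<Sum>i\<in>A. w i))\<^sup>2 \<le> real (card A) * (\<Sum>i\<in>A. (norm (w i))\<^sup>2)"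
proof -
  have "(norm (\<Sum>i\<in>A. w i))\<^sup>2 \<le> (\<Sum>i\<in>A. norm (w i))\<^sup>2"
    by (intro power_mono norm_sum) auto
  also have "\<dots> \<le> real (card A) * (\<Sum>i\<in>A. (norm (w i))\<^sup>2)"
    using sum_squared_le_sum_of_squares[of "\<lambda>i. norm (w i)" A] by (simp add: mult.commute)
  finally show ?thesis .
qed

lemma
  fixes d :: "nat \<Rightarrow> 'a::{real_normed_div_algebra, banach}" and z :: 'a
  assumes d: "summable (\<lambda>n. (norm (d n))\<^sup>2)" and z: "norm z < 1"
  shows summable_l2_times_power: "summable (\<lambda>n. d n * z ^ n)"
    and norm_suminf_l2_times_power_le:
      "(norm (\<Sum>n. d n * z ^ n))\<^sup>2 \<le> (\<Sum>n. (norm (d n))\<^sup>2) / (1 - (norm z)\<^sup>2)"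
proof -
  have z2: "(norm z)\<^sup>2 < 1"
    using z by (simp add: power_less_one_iff)
  have geom: "summable (\<lambda>n. ((norm z)\<^sup>2) ^ n)"
    using z2 by (intro summable_geometric) auto
  have norm_z_pow: "(norm (z ^ n))\<^sup>2 = ((norm z)\<^sup>2) ^ n" for n
    by (simp add: norm_power power_mult_distrib[symmetric] mult.commute flip: power_mult)
  have "norm (d n * z ^ n) \<le> (norm (d n))\<^sup>2 + ((norm z)\<^sup>2) ^ n" for n
    using sum_squares_bound[of "norm (d n)" "norm (z ^ n)"] norm_z_pow[of n]
      mult_nonneg_nonneg[OF norm_ge_zero[of "d n"] norm_ge_zero[of "z ^ n"]]
    unfolding norm_mult by linarith
  then show summable: "summable (\<lambda>n. d n * z ^ n)"
    by (intro summable_comparison_test[OF _ summable_add[OF d geom]]) auto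
  have partial: "(norm (\<Sum>n<m. d n * z ^ n))\<^sup>2 \<le> (\<Sum>n. (norm (d n))\<^sup>2) / (1 - (norm z)\<^sup>2)" for m
  proof -
    have "(norm (\<Sum>n<m. d n * z ^ n))\<^sup>2
          \<le> (\<Sum>n<m. (norm (d n))\<^sup>2) * (\<Sum>n<m. ((norm z)\<^sup>2) ^ n)"
      using norm_sum_mult_power2_le[of d "\<lambda>n. z ^ n" "{..<m}"] by (simp add: norm_z_pow)
    also have "\<dots> \<le> (\<Sum>n. (norm (d n))\<^sup>2) * (\<Sum>n. ((norm z)\<^sup>2) ^ n)"
      by (intro mult_mono sum_le_suminf d geom sum_nonneg suminf_nonneg) auto
    also have "(\<Sum>n. ((norm z)\<^sup>2) ^ n) = 1 / (1 - (norm z)\<^sup>2)"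
      using z2 by (subst suminf_geometric) auto
    finally show ?thesis by simp
  qed
  show "(norm (\<Sum>n. d n * z ^ n))\<^sup>2 \<le> (\<Sum>n. (norm (d n))\<^sup>2) / (1 - (norm z)\<^sup>2)"
  proof (rule LIMSEQ_le_const2)
    show "(\<lambda>m. (norm (\<Sum>n<m. d n * z ^ n))\<^sup>2) \<longlonglongrightarrow> (norm (\<Sum>n. d n * z ^ n))\<^sup>2"
      by (intro tendsto_intros summable_LIMSEQ summable)
  qed (use partial in blast)
qed

lemma finsupp_imp_l2seq: "finsupp_seq g \<Longrightarrow> l2seq g"
  unfolding l2seq_def finsupp_seq_def by (rule summable_finite[of "{n. g n \<noteq> 0}"]) auto

lemma summable_norm_diff_power2:
  assumes "l2seq a" "l2seq b"
  shows "summable (\<lambda>n. (norm (a n - b n))\<^sup>2)"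
proof (rule summable_comparison_test)
  show "\<exists>N. \<forall>n\<ge>N. norm ((norm (a n - b n))\<^sup>2) \<le> 2 * (norm (a n))\<^sup>2 + 2 * (norm (b n))\<^sup>2"
    using norm_add_power2_le[of "a _" "- b _"] by auto
  show "summable (\<lambda>n. 2 * (norm (a n))\<^sup>2 + 2 * (norm (b n))\<^sup>2)"
    using assms unfolding l2seq_def by (intro summable_add summable_mult)
qed

lemma l2dist2_nonneg: "l2seq a \<Longrightarrow> l2seq b \<Longrightarrow> 0 \<le> l2dist2 a b"
  unfolding l2dist2_def by (intro suminf_nonneg summable_norm_diff_power2) auto

lemma summable_pseries:
  assumes "l2seq g" "\<bar>t\<bar> < 1"
  shows "summable (\<lambda>n. g n * of_real t ^ n)"
  using summable_l2_times_power[of g "of_real t"] assms by (simp add: l2seq_def)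

lemma norm_pseries_power2_le:
  assumes "l2seq g" "\<bar>t\<bar> < 1"
  shows "(norm (pseries g t))\<^sup>2 \<le> (\<Sum>n. (norm (g n))\<^sup>2) / (1 - t\<^sup>2)"
  using norm_suminf_l2_times_power_le[of g "of_real t"] assms
  by (simp add: l2seq_def pseries_def)

lemma norm_pseries_diff_power2_le:
  assumes a: "l2seq a" and b: "l2seq b" and t: "\<bar>t\<bar> < 1"
  shows "(norm (pseries a t - pseries b t))\<^sup>2 \<le> l2dist2 a b / (1 - t\<^sup>2)"
proof -
  have "pseries a t - pseries b t = pseries (\<lambda>n. a n - b n) t"
    unfolding pseries_def
    by (subst suminf_diff[OF summable_pseries[OF a t] summable_pseries[OF b t]])
      (simp add: algebra_simps)
  also have "(norm \<dots>)\<^sup>2 \<le> l2dist2 a b / (1 - t\<^sup>2)"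
    using norm_pseries_power2_le[of "\<lambda>n. a n - b n" t] summable_norm_diff_power2[OF a b] t
    by (simp add: l2seq_def l2dist2_def)
  finally show ?thesis .
qed

lemma pseries_tendsto:
  assumes G: "\<And>k. l2seq (G k)" and g: "l2seq g" and t: "\<bar>t\<bar> < 1"
    and lim: "(\<lambda>k. l2dist2 (G k) g) \<longlonglongrightarrow> 0"
  shows "(\<lambda>k. pseries (G k) t) \<longlonglongrightarrow> pseries g t"
proof -
  have t2: "0 < 1 - t\<^sup>2"
    using t by (simp add: abs_square_less_1)
  have "(\<lambda>k. (norm (pseries (G k) t - pseries g t))\<^sup>2) \<longlonglongrightarrow> 0"
  proof (rule tendsto_sandwich[OF _ _ tendsto_const])
    show "(\<lambda>k. l2dist2 (G k) g / (1 - t\<^sup>2)) \<longlonglongrightarrow> 0"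
      using tendsto_divide[OF lim tendsto_const[of "1 - t\<^sup>2"]] t2 by simp
  qed (use norm_pseries_diff_power2_le[OF G g t] in auto)
  then have "(\<lambda>k. norm (pseries (G k) t - pseries g t)) \<longlonglongrightarrow> 0"
    using tendsto_real_sqrt by fastforce
  then show ?thesis
    by (simp add: tendsto_norm_zero_iff LIM_zero_iff)
qed

lemma pseries_eq_sum_lessThan:
  assumes "\<And>n. S \<le> n \<Longrightarrow> g n = 0"
  shows "pseries g t = (\<Sum>n<S. g n * of_real t ^ n)"
  unfolding pseries_def by (rule suminf_finite) (auto simp: assms not_less)

section \<open>Limit points of the graph of A\<close>

lemma AE_eq_pointwise_limit_of_L2_limit:
  fixes F :: "nat \<Rightarrow> 'a \<Rightarrow> 'b::{banach, second_countable_topology}"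
  assumes [measurable]: "\<And>k. F k \<in> borel_measurable M" "f \<in> borel_measurable M"
    "u \<in> borel_measurable M"
    and pointwise: "\<And>x. x \<in> space M \<Longrightarrow> (\<lambda>k. F k x) \<longlonglongrightarrow> u x"
    and L2: "(\<lambda>k. \<integral>\<^sup>+x. ennreal ((norm (F k x - f x))\<^sup>2) \<partial>M) \<longlonglongrightarrow> 0"
  shows "AE x in M. f x = u x"
proof -
  have "(\<integral>\<^sup>+x. ennreal ((norm (u x - f x))\<^sup>2) \<partial>M)
        = (\<integral>\<^sup>+x. liminf (\<lambda>k. ennreal ((norm (F k x - f x))\<^sup>2)) \<partial>M)"
  proof (rule nn_integral_cong)
    fix x assume "x \<in> space M"
    then have "(\<lambda>k. ennreal ((norm (F k x - f x))\<^sup>2)) \<longlonglongrightarrow> ennreal ((norm (u x - f x))\<^sup>2)"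
      by (intro tendsto_ennrealI tendsto_intros pointwise)
    then show "ennreal ((norm (u x - f x))\<^sup>2) = liminf (\<lambda>k. ennreal ((norm (F k x - f x))\<^sup>2))"
      by (rule lim_imp_Liminf[symmetric, OF sequentially_bot])
  qed
  also have "\<dots> \<le> liminf (\<lambda>k. \<integral>\<^sup>+x. ennreal ((norm (F k x - f x))\<^sup>2) \<partial>M)"
    by (rule nn_integral_liminf) measurable
  also have "\<dots> = 0"
    using L2 by (simp add: lim_imp_Liminf)
  finally have "AE x in M. ennreal ((norm (u x - f x))\<^sup>2) = 0"
    by (subst nn_integral_0_iff_AE[symmetric]) auto
  then show ?thesis
    by eventually_elim simp
qed

lemma space_eq_interval:
  assumes "sets M = sets (restrict_space borel {-1<..<(1::real)})"
  shows "space M = {-1<..<1}"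
  using sets_eq_imp_space_eq[OF assms] by simp

lemma borel_measurable_interval_measure:
  assumes "sets M = sets (restrict_space borel {-1<..<(1::real)})"
    and "f \<in> borel_measurable borel"
  shows "f \<in> borel_measurable M"
  using measurable_restrict_space1[OF assms(2)] measurable_cong_sets[OF assms(1) refl] by blast

lemma pseries_borel_measurable:
  assumes M: "sets M = sets (restrict_space borel {-1<..<(1::real)})" and g: "l2seq g"
  shows "pseries g \<in> borel_measurable M"
proof (rule borel_measurable_LIMSEQ_metric)
  show "(\<lambda>t. \<Sum>n<i. g n * of_real t ^ n) \<in> borel_measurable M" for i
    by (rule borel_measurable_interval_measure[OF M]) measurable
  fix t assume "t \<in> space M"
  then have "\<bar>t\<bar> < 1"
    using space_eq_interval[OF M] by auto
  then show "(\<lambda>i. \<Sum>n<i. g n * of_real t ^ n) \<longlonglongrightarrow> pseries g t"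
    unfolding pseries_def by (intro summable_LIMSEQ summable_pseries g)
qed

lemma graph_closure_A_imp_Amax:
  assumes M: "sets M = sets (restrict_space borel {-1<..<(1::real)})"
    and g: "l2seq g" and f: "L2fun M f" and closure: "in_graph_closure_A M g f"
  shows "dom_Amax M g \<and> (AE x in M. f x = pseries g x)"
proof -
  obtain G where G: "\<And>k. finsupp_seq (G k)" and lim_l2: "(\<lambda>k. l2dist2 (G k) g) \<longlonglongrightarrow> 0"
    and lim_L2: "(\<lambda>k. L2dist2 M (pseries (G k)) f) \<longlonglongrightarrow> 0"
    using closure unfolding in_graph_closure_A_def by blast
  have G_l2: "l2seq (G k)" for k
    using G by (rule finsupp_imp_l2seq)
  have f_meas: "f \<in> borel_measurable M" and f_int: "integrable M (\<lambda>x. (norm (f x))\<^sup>2)"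
    using f unfolding L2fun_def by auto
  have g_meas: "pseries g \<in> borel_measurable M"
    using pseries_borel_measurable[OF M g] .
  have ae: "AE x in M. f x = pseries g x"
  proof (rule AE_eq_pointwise_limit_of_L2_limit)
    show "x \<in> space M \<Longrightarrow> (\<lambda>k. pseries (G k) x) \<longlonglongrightarrow> pseries g x" for x
      using space_eq_interval[OF M] by (intro pseries_tendsto[OF G_l2 g _ lim_l2]) auto
  qed (use lim_L2 pseries_borel_measurable[OF M G_l2] f_meas g_meas in \<open>auto simp: L2dist2_def\<close>)
  have "integrable M (\<lambda>x. (norm (pseries g x))\<^sup>2)"
    using f_int by (rule integrable_cong_AE_imp) (use g_meas ae in \<open>auto elim: AE_mp\<close>)
  then show ?thesis
    using g g_meas ae unfolding dom_Amax_def L2fun_def by auto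
qed

section \<open>Damped truncations\<close>

definition l2norm2 :: "(nat \<Rightarrow> complex) \<Rightarrow> real" where
  "l2norm2 a = (\<Sum>n. (norm (a n))\<^sup>2)"

definition trunc_seq :: "nat \<Rightarrow> (nat \<Rightarrow> complex) \<Rightarrow> nat \<Rightarrow> complex" where
  "trunc_seq K a n = (if n < K then a n else 0)"

definition tail_seq :: "nat \<Rightarrow> (nat \<Rightarrow> complex) \<Rightarrow> nat \<Rightarrow> complex" where
  "tail_seq K a n = (if n < K then 0 else a n)"

lemma l2norm2_nonneg: "l2seq a \<Longrightarrow> 0 \<le> l2norm2 a"
  unfolding l2seq_def l2norm2_def by (intro suminf_nonneg) auto

lemma l2seq_tail_seq: "l2seq a \<Longrightarrow> l2seq (tail_seq K a)"
  unfolding l2seq_def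
  by (rule summable_comparison_test[of _ "\<lambda>n. (norm (a n))\<^sup>2"]) (auto simp: tail_seq_def)

lemma l2norm2_tail_seq_tendsto:
  assumes "l2seq a"
  shows "(\<lambda>K. l2norm2 (tail_seq K a)) \<longlonglongrightarrow> 0"
proof -
  have "l2norm2 (tail_seq K a) = (\<Sum>i. (norm (a (i + K)))\<^sup>2)" for K
  proof -
    have "(\<lambda>n. (norm (tail_seq K a n))\<^sup>2) sums l2norm2 (tail_seq K a)"
      using l2seq_tail_seq[OF assms] unfolding l2seq_def l2norm2_def by (rule summable_sums)
    then have "(\<lambda>i. (norm (tail_seq K a (i + K)))\<^sup>2) sums l2norm2 (tail_seq K a)"
      by (subst sums_zero_iff_shift) (simp_all add: tail_seq_def)
    then show ?thesis
      by (simp add: tail_seq_def sums_iff)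
  qed
  then show ?thesis
    using suminf_exist_split2[of "\<lambda>n. (norm (a n))\<^sup>2"] assms by (simp add: l2seq_def)
qed

lemma sum_norm_power2_le_l2norm2_tail_seq:
  assumes "l2seq a"
  shows "(\<Sum>m\<in>{L..<K}. (norm (a m))\<^sup>2) \<le> l2norm2 (tail_seq L a)"
proof -
  have "(\<Sum>m\<in>{L..<K}. (norm (a m))\<^sup>2) = (\<Sum>m\<in>{L..<K}. (norm (tail_seq L a m))\<^sup>2)"
    by (intro sum.cong) (auto simp: tail_seq_def)
  also have "\<dots> \<le> l2norm2 (tail_seq L a)"
    using l2seq_tail_seq[OF assms] unfolding l2seq_def l2norm2_def
    by (intro sum_le_suminf) auto
  finally show ?thesis .
qed

lemma pseries_trunc_seq: "pseries (trunc_seq K a) t = (\<Sum>n<K. a n * of_real t ^ n)"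
  by (subst pseries_eq_sum_lessThan[of K]) (auto simp: trunc_seq_def)

lemma pseries_eq_trunc_add_tail:
  assumes a: "l2seq a" and t: "\<bar>t\<bar> < 1"
  shows "pseries a t = (\<Sum>n<K. a n * of_real t ^ n) + pseries (tail_seq K a) t"
proof -
  have "pseries a t = (\<Sum>n. trunc_seq K a n * of_real t ^ n + tail_seq K a n * of_real t ^ n)"
    unfolding pseries_def by (intro suminf_cong) (auto simp: trunc_seq_def tail_seq_def)
  also have "\<dots> = pseries (trunc_seq K a) t + pseries (tail_seq K a) t"
    unfolding pseries_def
    by (intro suminf_add[symmetric] summable_pseries l2seq_tail_seq finsupp_imp_l2seq a t)
      (auto simp: finsupp_seq_def trunc_seq_def)
  finally show ?thesis
    by (simp add: pseries_trunc_seq)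
qed

definition even_shifts :: "nat \<Rightarrow> (nat \<Rightarrow> complex) \<Rightarrow> nat set \<Rightarrow> nat \<Rightarrow> complex" where
  "even_shifts N a A n = (\<Sum>j\<in>{1..N}. \<Sum>m\<in>A. if n = m + 2 * j then a m else 0)"

lemma even_shifts_eq_0: "K + 2 * N \<le> n \<Longrightarrow> even_shifts N a {..<K} n = 0"
  unfolding even_shifts_def by (intro sum.neutral ballI) auto

lemma even_shifts_split:
  assumes "L \<le> K"
  shows "even_shifts N a {..<K} n = even_shifts N a {..<L} n + even_shifts N a {L..<K} n"
proof -
  have "(\<Sum>m\<in>{..<K}. h m) = (\<Sum>m\<in>{..<L}. h m) + (\<Sum>m\<in>{L..<K}. h m)"
    for h :: "nat \<Rightarrow> complex"
    using sum.atLeastLessThan_concat[of 0 L K h] assms by (simp add: atLeast0LessThan)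
  then show ?thesis
    unfolding even_shifts_def by (simp add: sum.distrib)
qed

lemma pseries_even_shifts:
  "pseries (even_shifts N a {..<K}) t
     = (\<Sum>j\<in>{1..N}. of_real t ^ (2 * j)) * (\<Sum>m<K. a m * of_real t ^ m)"
proof -
  let ?t = "complex_of_real t" and ?S = "K + 2 * N"
  have "pseries (even_shifts N a {..<K}) t = (\<Sum>n<?S. even_shifts N a {..<K} n * ?t ^ n)"
    by (rule pseries_eq_sum_lessThan) (rule even_shifts_eq_0)
  also have "\<dots> = (\<Sum>n<?S. \<Sum>j\<in>{1..N}. \<Sum>m<K. if n = m + 2 * j then a m * ?t ^ n else 0)"
    unfolding even_shifts_def sum_distrib_right by (intro sum.cong refl) simp
  also have "\<dots> = (\<Sum>j\<in>{1..N}. \<Sum>m<K. \<Sum>n<?S. if n = m + 2 * j then a m * ?t ^ n else 0)"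
    by (subst sum.swap) (subst (2) sum.swap, rule refl)
  also have "\<dots> = (\<Sum>j\<in>{1..N}. \<Sum>m<K. ?t ^ (2 * j) * (a m * ?t ^ m))"
    by (intro sum.cong refl) (simp add: sum.delta' power_add)
  finally show ?thesis
    by (simp add: sum_product)
qed

lemma sum_norm_even_shifts_power2_le:
  assumes A: "finite A"
    and c: "\<And>n. card {p \<in> {1..N} \<times> A. n = snd p + 2 * fst p} \<le> c"
  shows "(\<Sum>n<S. (norm (even_shifts N a A n))\<^sup>2) \<le> real c * real N * (\<Sum>m\<in>A. (norm (a m))\<^sup>2)"
proof -
  define P where "P n = {p \<in> {1..N} \<times> A. n = snd p + 2 * fst p}" for n
  define w where "w n p = (if n = snd p + 2 * fst p then (norm (a (snd p)))\<^sup>2 else 0)" for n p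
  have fin: "finite ({1..N} \<times> A)"
    using A by auto
  have pointwise: "(norm (even_shifts N a A n))\<^sup>2 \<le> real c * (\<Sum>p\<in>{1..N} \<times> A. w n p)" for n
  proof -
    have "even_shifts N a A n
          = (\<Sum>p\<in>{1..N} \<times> A. if n = snd p + 2 * fst p then a (snd p) else 0)"
      unfolding even_shifts_def by (simp add: sum.cartesian_product split_def)
    also have "\<dots> = (\<Sum>p\<in>P n. a (snd p))"
      unfolding P_def using fin by (simp add: sum.inter_filter)
    finally have "(norm (even_shifts N a A n))\<^sup>2 \<le> real (card (P n)) * (\<Sum>p\<in>P n. (norm (a (snd p)))\<^sup>2)"
      by (simp add: norm_sum_power2_le_card)
    also have "\<dots> \<le> real c * (\<Sum>p\<in>P n. (norm (a (snd p)))\<^sup>2)"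
      using c[of n] by (intro mult_right_mono sum_nonneg) (auto simp: P_def)
    also have "(\<Sum>p\<in>P n. (norm (a (snd p)))\<^sup>2) = (\<Sum>p\<in>{1..N} \<times> A. w n p)"
      unfolding P_def w_def by (simp only: sum.inter_filter[OF fin])
    finally show ?thesis .
  qed
  have "(\<Sum>n<S. (norm (even_shifts N a A n))\<^sup>2) \<le> real c * (\<Sum>p\<in>{1..N} \<times> A. \<Sum>n<S. w n p)"
    using sum_mono[of "{..<S}", OF pointwise]
    by (simp add: sum_distrib_left[symmetric] sum.swap[of _ "{..<S}"])
  also have "\<dots> \<le> real c * (\<Sum>p\<in>{1..N} \<times> A. (norm (a (snd p)))\<^sup>2)"
    by (intro mult_left_mono sum_mono) (auto simp: w_def sum.delta')
  also have "(\<Sum>p\<in>{1..N} \<times> A. (norm (a (snd p)))\<^sup>2) = real N * (\<Sum>m\<in>A. (norm (a m))\<^sup>2)"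
    using sum.cartesian_product[of "\<lambda>j m. (norm (a m))\<^sup>2" A "{1..N}"] by (simp add: split_def)
  finally show ?thesis
    by (simp add: mult.assoc)
qed

lemma card_even_shift_pairs_le:
  shows "card {p \<in> {1..N} \<times> A. n = snd p + 2 * fst p} \<le> N"
    and "finite A \<Longrightarrow> card {p \<in> {1..N} \<times> A. n = snd p + 2 * fst p} \<le> card A"
proof -
  let ?P = "{p \<in> {1..N} \<times> A. n = snd p + 2 * fst p}"
  have "inj_on fst ?P" "inj_on snd ?P"
    by (auto simp: inj_on_def)
  then have card_P: "card ?P = card (fst ` ?P)" "card ?P = card (snd ` ?P)"
    by (simp_all add: card_image)
  have "card (fst ` ?P) \<le> card {1..N}"
    by (intro card_mono) auto
  then show "card ?P \<le> N"
    using card_P(1) by simp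
  show "card ?P \<le> card A" if "finite A"
    unfolding card_P(2) by (intro card_mono that) auto
qed

lemma sum_norm_even_shifts_trunc_power2_le:
  assumes a: "l2seq a" and LK: "L \<le> K"
  shows "(\<Sum>n<S. (norm (even_shifts N a {..<K} n))\<^sup>2)
           \<le> 2 * real L * real N * l2norm2 a + 2 * (real N)\<^sup>2 * l2norm2 (tail_seq L a)"
proof -
  have head: "(\<Sum>n<S. (norm (even_shifts N a {..<L} n))\<^sup>2) \<le> real L * real N * l2norm2 a"
  proof -
    have "(\<Sum>n<S. (norm (even_shifts N a {..<L} n))\<^sup>2)
          \<le> real (card {..<L}) * real N * (\<Sum>m<L. (norm (a m))\<^sup>2)"
      by (intro sum_norm_even_shifts_power2_le card_even_shift_pairs_le(2)) simp_all
    also have "\<dots> \<le> real L * real N * l2norm2 a"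
      using a unfolding l2seq_def l2norm2_def card_lessThan
      by (intro mult_left_mono sum_le_suminf) auto
    finally show ?thesis .
  qed
  have tail: "(\<Sum>n<S. (norm (even_shifts N a {L..<K} n))\<^sup>2) \<le> (real N)\<^sup>2 * l2norm2 (tail_seq L a)"
  proof -
    have "(\<Sum>n<S. (norm (even_shifts N a {L..<K} n))\<^sup>2)
          \<le> real N * real N * (\<Sum>m\<in>{L..<K}. (norm (a m))\<^sup>2)"
      by (intro sum_norm_even_shifts_power2_le card_even_shift_pairs_le(1)) simp
    also have "\<dots> \<le> real N * real N * l2norm2 (tail_seq L a)"
      by (intro mult_left_mono sum_norm_power2_le_l2norm2_tail_seq a) auto
    finally show ?thesis
      by (simp add: power2_eq_square)
  qed
  have "(\<Sum>n<S. (norm (even_shifts N a {..<K} n))\<^sup>2)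
        \<le> (\<Sum>n<S. 2 * (norm (even_shifts N a {..<L} n))\<^sup>2 + 2 * (norm (even_shifts N a {L..<K} n))\<^sup>2)"
    unfolding even_shifts_split[OF LK] by (intro sum_mono norm_add_power2_le)
  then show ?thesis
    using head tail by (simp add: sum.distrib sum_distrib_left[symmetric])
qed

definition even_power_mean :: "nat \<Rightarrow> real \<Rightarrow> real" where
  "even_power_mean N t = (\<Sum>j\<in>{1..N}. t ^ (2 * j)) / real N"

lemma borel_measurable_even_power_mean: "even_power_mean N \<in> borel_measurable borel"
  unfolding even_power_mean_def by measurable

lemma even_power_mean_eq: "even_power_mean N t = (\<Sum>j\<in>{1..N}. (t\<^sup>2) ^ j) / real N"
  unfolding even_power_mean_def by (simp add: power_mult)

lemma
  assumes t: "\<bar>t\<bar> < 1"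
  shows even_power_mean_nonneg: "0 \<le> even_power_mean N t"
    and even_power_mean_le_1: "even_power_mean N t \<le> 1"
    and even_power_mean_le: "even_power_mean N t \<le> 1 / (real N * (1 - t\<^sup>2))"
proof -
  have t2: "0 \<le> t\<^sup>2" "t\<^sup>2 < 1"
    using t by (auto simp: abs_square_less_1)
  show "0 \<le> even_power_mean N t"
    unfolding even_power_mean_eq by (intro divide_nonneg_nonneg sum_nonneg) auto
  have "(\<Sum>j\<in>{1..N}. (t\<^sup>2) ^ j) \<le> (\<Sum>j\<in>{1..N}. 1)"
    using power_le_one[of "t\<^sup>2"] t2 by (intro sum_mono) auto
  then show "even_power_mean N t \<le> 1"
    unfolding even_power_mean_eq by (cases "N = 0") auto
  have "(\<Sum>j\<in>{1..N}. (t\<^sup>2) ^ j) \<le> (\<Sum>j. (t\<^sup>2) ^ j)"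
    using t2 by (intro sum_le_suminf summable_geometric) auto
  also have "\<dots> = 1 / (1 - t\<^sup>2)"
    using t2 by (subst suminf_geometric) auto
  finally have "(\<Sum>j\<in>{1..N}. (t\<^sup>2) ^ j) / real N \<le> 1 / (1 - t\<^sup>2) / real N"
    by (rule divide_right_mono) simp
  then show "even_power_mean N t \<le> 1 / (real N * (1 - t\<^sup>2))"
    unfolding even_power_mean_eq by (simp add: mult.commute)
qed

lemma one_minus_even_power_mean_le:
  assumes N: "N \<ge> 1" and t: "\<bar>t\<bar> < 1"
  shows "1 - even_power_mean N t \<le> real N * (1 - t\<^sup>2)"
proof -
  have t2: "0 \<le> t\<^sup>2" "t\<^sup>2 < 1"
    using t by (auto simp: abs_square_less_1)
  have "1 - (t\<^sup>2) ^ j \<le> real N * (1 - t\<^sup>2)" if "j \<in> {1..N}" for j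
  proof -
    have "1 - (t\<^sup>2) ^ j \<le> real j * (1 - t\<^sup>2)"
      using Bernoulli_inequality[of "t\<^sup>2 - 1" j] t2 by (simp add: algebra_simps)
    also have "\<dots> \<le> real N * (1 - t\<^sup>2)"
      using that t2 by (intro mult_right_mono) auto
    finally show ?thesis .
  qed
  then have "(\<Sum>j\<in>{1..N}. 1 - (t\<^sup>2) ^ j) \<le> real N * (real N * (1 - t\<^sup>2))"
    using sum_mono[of "{1..N}" "\<lambda>j. 1 - (t\<^sup>2) ^ j" "\<lambda>_. real N * (1 - t\<^sup>2)"] by simp
  then show ?thesis
    unfolding even_power_mean_eq using N by (simp add: sum_subtractf field_simps)
qed

lemma even_power_mean_tendsto_0:
  assumes t: "\<bar>t\<bar> < 1"
  shows "(\<lambda>N. even_power_mean N t) \<longlonglongrightarrow> 0"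
proof (rule tendsto_sandwich[OF _ _ tendsto_const])
  show "(\<lambda>N. 1 / (real N * (1 - t\<^sup>2))) \<longlonglongrightarrow> 0"
    using lim_const_over_n[of "1 / (1 - t\<^sup>2)"] by (simp add: mult.commute)
  show "\<forall>\<^sub>F N in sequentially. 0 \<le> even_power_mean N t"
    "\<forall>\<^sub>F N in sequentially. even_power_mean N t \<le> 1 / (real N * (1 - t\<^sup>2))"
    using even_power_mean_nonneg[OF t] even_power_mean_le[OF t] by simp_all
qed

definition damped_trunc :: "nat \<Rightarrow> nat \<Rightarrow> (nat \<Rightarrow> complex) \<Rightarrow> nat \<Rightarrow> complex" where
  "damped_trunc N K a n = trunc_seq K a n - even_shifts N a {..<K} n / of_nat N"

lemma damped_trunc_eq_0: "K + 2 * N \<le> n \<Longrightarrow> damped_trunc N K a n = 0"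
  by (simp add: damped_trunc_def trunc_seq_def even_shifts_eq_0)

lemma finsupp_damped_trunc: "finsupp_seq (damped_trunc N K a)"
proof -
  have "{n. damped_trunc N K a n \<noteq> 0} \<subseteq> {..<K + 2 * N}"
  proof
    fix n assume "n \<in> {n. damped_trunc N K a n \<noteq> 0}"
    then show "n \<in> {..<K + 2 * N}"
      using damped_trunc_eq_0[of K N n a] by (cases "K + 2 * N \<le> n") auto
  qed
  then show ?thesis
    unfolding finsupp_seq_def by (rule finite_subset) simp
qed

lemma pseries_damped_trunc:
  assumes "N \<ge> 1"
  shows "pseries (damped_trunc N K a) t
           = (\<Sum>n<K. a n * of_real t ^ n) * (1 - of_real (even_power_mean N t))"
proof -
  let ?S = "K + 2 * N"
  have vanish: "trunc_seq K a n = 0" "even_shifts N a {..<K} n = 0" if "?S \<le> n" for n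
    using that by (simp_all add: trunc_seq_def even_shifts_eq_0)
  have "pseries (damped_trunc N K a) t = (\<Sum>n<?S. damped_trunc N K a n * of_real t ^ n)"
    by (rule pseries_eq_sum_lessThan) (rule damped_trunc_eq_0)
  also have "\<dots> = (\<Sum>n<?S. trunc_seq K a n * of_real t ^ n)
          - (\<Sum>n<?S. even_shifts N a {..<K} n * of_real t ^ n) / of_nat N"
    unfolding damped_trunc_def by (simp add: algebra_simps sum_subtractf sum_divide_distrib)
  also have "\<dots> = pseries (trunc_seq K a) t - pseries (even_shifts N a {..<K}) t / of_nat N"
    by (simp add: pseries_eq_sum_lessThan[of ?S] vanish)
  finally show ?thesis
    using assms
    by (simp add: pseries_trunc_seq pseries_even_shifts even_power_mean_def algebra_simps)
qed

lemma norm_pseries_damped_trunc_diff_power2_le: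
  assumes a: "l2seq a" and N: "N \<ge> 1" and t: "\<bar>t\<bar> < 1"
  shows "(norm (pseries (damped_trunc N K a) t - pseries a t))\<^sup>2
           \<le> 2 * real N * l2norm2 (tail_seq K a)
             + 2 * (norm (pseries a t))\<^sup>2 * (even_power_mean N t)\<^sup>2"
proof -
  define R where "R = pseries (tail_seq K a) t"
  define B where "B = even_power_mean N t"
  have t2: "0 < 1 - t\<^sup>2"
    using t by (simp add: abs_square_less_1)
  have B: "0 \<le> B" "B \<le> 1" "1 - B \<le> real N * (1 - t\<^sup>2)"
    unfolding B_def using even_power_mean_nonneg even_power_mean_le_1
      one_minus_even_power_mean_le N t by auto
  have R: "(norm R)\<^sup>2 \<le> l2norm2 (tail_seq K a) / (1 - t\<^sup>2)"
    unfolding R_def l2norm2_def by (rule norm_pseries_power2_le[OF l2seq_tail_seq[OF a] t])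
  have norm_1_minus_B: "norm (1 - complex_of_real B) = 1 - B"
    using norm_of_real[of "1 - B"] B(2) by simp
  have "pseries (damped_trunc N K a) t - pseries a t
        = - (R * of_real (1 - B)) - pseries a t * of_real B"
    unfolding pseries_damped_trunc[OF N] pseries_eq_trunc_add_tail[OF a t, of K]
    by (simp add: R_def B_def algebra_simps)
  then have "(norm (pseries (damped_trunc N K a) t - pseries a t))\<^sup>2
             \<le> 2 * ((norm R)\<^sup>2 * (1 - B)\<^sup>2) + 2 * ((norm (pseries a t))\<^sup>2 * B\<^sup>2)"
    using norm_add_power2_le[of "- (R * of_real (1 - B))" "- (pseries a t * of_real B)"]
    by (simp add: norm_mult power_mult_distrib norm_1_minus_B)
  also have "(norm R)\<^sup>2 * (1 - B)\<^sup>2 \<le> l2norm2 (tail_seq K a) / (1 - t\<^sup>2) * (real N * (1 - t\<^sup>2))"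
  proof (rule mult_mono[OF R])
    have "(1 - B)\<^sup>2 \<le> 1 - B"
      using B by (simp add: power2_eq_square mult_left_le)
    then show "(1 - B)\<^sup>2 \<le> real N * (1 - t\<^sup>2)"
      using B(3) by linarith
  qed (use l2norm2_nonneg[OF l2seq_tail_seq[OF a]] t2 in auto)
  also have "l2norm2 (tail_seq K a) / (1 - t\<^sup>2) * (real N * (1 - t\<^sup>2))
             = real N * l2norm2 (tail_seq K a)"
    using t2 by simp
  finally show ?thesis
    by (simp add: B_def mult.assoc)
qed

lemma l2dist2_damped_trunc_le:
  assumes a: "l2seq a" and N: "N \<ge> 1" and LK: "L \<le> K"
  shows "l2dist2 (damped_trunc N K a) a
           \<le> 2 * l2norm2 (tail_seq K a) + 4 * real L * l2norm2 a / real N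
             + 4 * l2norm2 (tail_seq L a)"
proof -
  let ?C = "even_shifts N a {..<K}" and ?S = "K + 2 * N"
  define c where "c n = 2 * ((norm (?C n))\<^sup>2 / (real N)\<^sup>2)" for n
  have pointwise: "(norm (damped_trunc N K a n - a n))\<^sup>2 \<le> 2 * (norm (tail_seq K a n))\<^sup>2 + c n" for n
  proof -
    have "damped_trunc N K a n - a n = - tail_seq K a n + - (?C n / of_nat N)"
      by (simp add: damped_trunc_def trunc_seq_def tail_seq_def)
    then show ?thesis
      using norm_add_power2_le[of "- tail_seq K a n" "- (?C n / of_nat N)"]
      by (simp add: c_def norm_divide power_divide)
  qed
  have c_eq_0: "c n = 0" if "?S \<le> n" for n
    using that by (simp add: c_def even_shifts_eq_0)
  then have c_outside: "c n = 0" if "n \<notin> {..<?S}" for n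
    using that by simp
  have sum_c: "summable c" "suminf c = (\<Sum>n<?S. c n)"
    using summable_finite[of "{..<?S}" c, OF _ c_outside] suminf_finite[of "{..<?S}" c, OF _ c_outside]
    by simp_all
  have sum_tail: "summable (\<lambda>n. 2 * (norm (tail_seq K a n))\<^sup>2)"
    using l2seq_tail_seq[OF a] unfolding l2seq_def by (rule summable_mult)
  have "l2dist2 (damped_trunc N K a) a \<le> (\<Sum>n. 2 * (norm (tail_seq K a n))\<^sup>2 + c n)"
    unfolding l2dist2_def
    by (intro suminf_le pointwise summable_add sum_tail sum_c summable_norm_diff_power2
        finsupp_imp_l2seq finsupp_damped_trunc a)
  also have "\<dots> = 2 * l2norm2 (tail_seq K a) + 2 / (real N)\<^sup>2 * (\<Sum>n<?S. (norm (?C n))\<^sup>2)"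
    using suminf_add[OF sum_tail sum_c(1)] suminf_mult[of "\<lambda>n. (norm (tail_seq K a n))\<^sup>2" 2]
      l2seq_tail_seq[OF a]
    by (simp add: sum_c(2) l2norm2_def l2seq_def c_def sum_distrib_left)
  also have "\<dots> \<le> 2 * l2norm2 (tail_seq K a)
      + 2 / (real N)\<^sup>2 * (2 * real L * real N * l2norm2 a + 2 * (real N)\<^sup>2 * l2norm2 (tail_seq L a))"
    by (intro add_left_mono mult_left_mono sum_norm_even_shifts_trunc_power2_le a LK) simp
  also have "\<dots> = 2 * l2norm2 (tail_seq K a) + 4 * real L * l2norm2 a / real N
      + 4 * l2norm2 (tail_seq L a)"
    using N by (simp add: field_simps power2_eq_square)
  finally show ?thesis .
qed

lemma L2dist2_pseries_damped_trunc_le: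
  assumes M: "sets M = sets (restrict_space borel {-1<..<(1::real)})"
    and g: "l2seq g" and N: "N \<ge> 1"
  shows "L2dist2 M (pseries (damped_trunc N K g)) (pseries g)
           \<le> ennreal (2 * real N * l2norm2 (tail_seq K g)) * emeasure M (space M)
             + (\<integral>\<^sup>+x. ennreal (2 * (norm (pseries g x))\<^sup>2 * (even_power_mean N x)\<^sup>2) \<partial>M)"
proof -
  have [measurable]: "pseries g \<in> borel_measurable M" "even_power_mean N \<in> borel_measurable M"
    using pseries_borel_measurable[OF M g]
      borel_measurable_interval_measure[OF M borel_measurable_even_power_mean] .
  have "L2dist2 M (pseries (damped_trunc N K g)) (pseries g)
        \<le> (\<integral>\<^sup>+x. ennreal (2 * real N * l2norm2 (tail_seq K g))
                 + ennreal (2 * (norm (pseries g x))\<^sup>2 * (even_power_mean N x)\<^sup>2) \<partial>M)"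
    unfolding L2dist2_def
  proof (rule nn_integral_mono)
    fix x assume "x \<in> space M"
    then have "\<bar>x\<bar> < 1"
      using space_eq_interval[OF M] by auto
    then have "(norm (pseries (damped_trunc N K g) x - pseries g x))\<^sup>2
      \<le> 2 * real N * l2norm2 (tail_seq K g) + 2 * (norm (pseries g x))\<^sup>2 * (even_power_mean N x)\<^sup>2"
      by (rule norm_pseries_damped_trunc_diff_power2_le[OF g N])
    then have "ennreal ((norm (pseries (damped_trunc N K g) x - pseries g x))\<^sup>2)
      \<le> ennreal (2 * real N * l2norm2 (tail_seq K g) + 2 * (norm (pseries g x))\<^sup>2 * (even_power_mean N x)\<^sup>2)"
      by (rule ennreal_leI)
    also have "\<dots> = ennreal (2 * real N * l2norm2 (tail_seq K g))
         + ennreal (2 * (norm (pseries g x))\<^sup>2 * (even_power_mean N x)\<^sup>2)"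
      using l2norm2_nonneg[OF l2seq_tail_seq[OF g]] by (intro ennreal_plus) auto
    finally show "ennreal ((norm (pseries (damped_trunc N K g) x - pseries g x))\<^sup>2)
      \<le> ennreal (2 * real N * l2norm2 (tail_seq K g))
         + ennreal (2 * (norm (pseries g x))\<^sup>2 * (even_power_mean N x)\<^sup>2)" .
  qed
  also have "\<dots> = ennreal (2 * real N * l2norm2 (tail_seq K g)) * emeasure M (space M)
      + (\<integral>\<^sup>+x. ennreal (2 * (norm (pseries g x))\<^sup>2 * (even_power_mean N x)\<^sup>2) \<partial>M)"
    by (subst nn_integral_add) auto
  finally show ?thesis .
qed

lemma nn_integral_damped_tendsto_0:
  assumes M: "sets M = sets (restrict_space borel {-1<..<(1::real)})" and h: "L2fun M h"
  shows "(\<lambda>N. \<integral>\<^sup>+x. ennreal (2 * (norm (h x))\<^sup>2 * (even_power_mean N x)\<^sup>2) \<partial>M) \<longlonglongrightarrow> 0"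
proof -
  have [measurable]: "h \<in> borel_measurable M" "even_power_mean N \<in> borel_measurable M" for N
    using h borel_measurable_interval_measure[OF M borel_measurable_even_power_mean]
    by (auto simp: L2fun_def)
  have inside: "\<bar>x\<bar> < 1" if "x \<in> space M" for x
    using that space_eq_interval[OF M] by auto
  have "(\<lambda>N. \<integral>\<^sup>+x. ennreal (2 * (norm (h x))\<^sup>2 * (even_power_mean N x)\<^sup>2) \<partial>M)
        \<longlonglongrightarrow> (\<integral>\<^sup>+x. 0 \<partial>M)"
  proof (rule nn_integral_dominated_convergence[where w="\<lambda>x. ennreal (2 * (norm (h x))\<^sup>2)"])
    show "AE x in M. ennreal (2 * (norm (h x))\<^sup>2 * (even_power_mean N x)\<^sup>2)
                       \<le> ennreal (2 * (norm (h x))\<^sup>2)" for N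
    proof (rule AE_I2, rule ennreal_leI)
      fix x assume "x \<in> space M"
      then have "(even_power_mean N x)\<^sup>2 \<le> 1"
        using inside even_power_mean_nonneg even_power_mean_le_1 by (simp add: power_le_one)
      then show "2 * (norm (h x))\<^sup>2 * (even_power_mean N x)\<^sup>2 \<le> 2 * (norm (h x))\<^sup>2"
        by (simp add: mult_left_le)
    qed
    show "(\<integral>\<^sup>+x. ennreal (2 * (norm (h x))\<^sup>2) \<partial>M) < \<infinity>"
    proof -
      have "integrable M (\<lambda>x. 2 * (norm (h x))\<^sup>2)"
        using h unfolding L2fun_def by simp
      then show ?thesis
        using integrableD(2) by (fastforce simp: top.not_eq_extremum)
    qed
    show "AE x in M. (\<lambda>N. ennreal (2 * (norm (h x))\<^sup>2 * (even_power_mean N x)\<^sup>2)) \<longlonglongrightarrow> 0"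
    proof (rule AE_I2)
      fix x assume "x \<in> space M"
      then have "(\<lambda>N. 2 * (norm (h x))\<^sup>2 * (even_power_mean N x)\<^sup>2) \<longlonglongrightarrow> 2 * (norm (h x))\<^sup>2 * 0\<^sup>2"
        by (intro tendsto_intros even_power_mean_tendsto_0 inside)
      then show "(\<lambda>N. ennreal (2 * (norm (h x))\<^sup>2 * (even_power_mean N x)\<^sup>2)) \<longlonglongrightarrow> 0"
        using tendsto_ennrealI by fastforce
    qed
  qed measurable
  then show ?thesis
    by simp
qed

section \<open>Approximation in the graph of A_max\<close>

lemma damped_trunc_approx:
  assumes M: "sets M = sets (restrict_space borel {-1<..<(1::real)})" and fin: "finite_measure M"
    and g: "l2seq g" and e: "0 < \<epsilon>" and N: "1 \<le> N" and LK: "L \<le> K"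
    and L: "l2norm2 (tail_seq L g) < \<epsilon> / 16"
    and N_l2: "4 * real L * l2norm2 g / real N < \<epsilon> / 4"
    and N_L2: "(\<integral>\<^sup>+x. ennreal (2 * (norm (pseries g x))\<^sup>2 * (even_power_mean N x)\<^sup>2) \<partial>M)
                 < ennreal (\<epsilon> / 4)"
    and K_l2: "2 * l2norm2 (tail_seq K g) < \<epsilon> / 4"
    and K_L2: "2 * real N * l2norm2 (tail_seq K g) * measure M (space M) < \<epsilon> / 4"
  shows "l2dist2 (damped_trunc N K g) g < \<epsilon>"
    and "L2dist2 M (pseries (damped_trunc N K g)) (pseries g) < ennreal \<epsilon>"
proof -
  have "l2dist2 (damped_trunc N K g) g
        \<le> 2 * l2norm2 (tail_seq K g) + 4 * real L * l2norm2 g / real N + 4 * l2norm2 (tail_seq L g)"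
    by (rule l2dist2_damped_trunc_le[OF g N LK])
  also have "\<dots> < \<epsilon>"
    using K_l2 N_l2 L e by linarith
  finally show "l2dist2 (damped_trunc N K g) g < \<epsilon>" .
  have "L2dist2 M (pseries (damped_trunc N K g)) (pseries g)
        \<le> ennreal (2 * real N * l2norm2 (tail_seq K g)) * emeasure M (space M)
          + (\<integral>\<^sup>+x. ennreal (2 * (norm (pseries g x))\<^sup>2 * (even_power_mean N x)\<^sup>2) \<partial>M)"
    by (rule L2dist2_pseries_damped_trunc_le[OF M g N])
  also have "ennreal (2 * real N * l2norm2 (tail_seq K g)) * emeasure M (space M)
             = ennreal (2 * real N * l2norm2 (tail_seq K g) * measure M (space M))"
    using fin l2norm2_nonneg[OF l2seq_tail_seq[OF g], of K]
    by (simp add: finite_measure.emeasure_eq_measure ennreal_mult'')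
  also have "\<dots> + (\<integral>\<^sup>+x. ennreal (2 * (norm (pseries g x))\<^sup>2 * (even_power_mean N x)\<^sup>2) \<partial>M)
             \<le> ennreal (\<epsilon> / 4) + ennreal (\<epsilon> / 4)"
    using K_L2 N_L2 by (intro add_mono ennreal_leI) auto
  also have "\<dots> < ennreal \<epsilon>"
    using e by (simp add: ennreal_plus[symmetric] ennreal_lessI del: ennreal_plus)
  finally show "L2dist2 M (pseries (damped_trunc N K g)) (pseries g) < ennreal \<epsilon>" .
qed

lemma finsupp_approx_Amax:
  assumes M: "sets M = sets (restrict_space borel {-1<..<(1::real)})" and fin: "finite_measure M"
    and g: "l2seq g" and h: "L2fun M (pseries g)" and e: "0 < \<epsilon>"
  shows "\<exists>G. finsupp_seq G \<and> l2dist2 G g < \<epsilon> \<and> L2dist2 M (pseries G) (pseries g) < ennreal \<epsilon>"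
proof -
  define T where "T K = l2norm2 (tail_seq K g)" for K
  define Mt where "Mt = measure M (space M)"
  have T_lim: "T \<longlonglongrightarrow> 0"
    unfolding T_def by (rule l2norm2_tail_seq_tendsto[OF g])
  obtain L where L: "T L < \<epsilon> / 16"
    using order_tendstoD(2)[OF T_lim, of "\<epsilon> / 16"] e by (auto simp: eventually_sequentially)
  have "\<forall>\<^sub>F N in sequentially. 1 \<le> N \<and> 4 * real L * l2norm2 g / real N < \<epsilon> / 4 \<and>
      (\<integral>\<^sup>+x. ennreal (2 * (norm (pseries g x))\<^sup>2 * (even_power_mean N x)\<^sup>2) \<partial>M) < ennreal (\<epsilon> / 4)"
    using eventually_ge_at_top[of 1]
      order_tendstoD(2)[OF lim_const_over_n[of "4 * real L * l2norm2 g"], of "\<epsilon> / 4"]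
      order_tendstoD(2)[OF nn_integral_damped_tendsto_0[OF M h], of "ennreal (\<epsilon> / 4)"] e
    by (intro eventually_conj) simp_all
  then obtain N where N: "1 \<le> N" "4 * real L * l2norm2 g / real N < \<epsilon> / 4"
    "(\<integral>\<^sup>+x. ennreal (2 * (norm (pseries g x))\<^sup>2 * (even_power_mean N x)\<^sup>2) \<partial>M) < ennreal (\<epsilon> / 4)"
    by (auto simp: eventually_sequentially)
  have "\<forall>\<^sub>F K in sequentially. L \<le> K \<and> 2 * T K < \<epsilon> / 4 \<and> 2 * real N * T K * Mt < \<epsilon> / 4"
    using eventually_ge_at_top[of L]
      order_tendstoD(2)[OF tendsto_mult_right_zero[OF T_lim, of 2], of "\<epsilon> / 4"]
      order_tendstoD(2)[OF tendsto_mult_left_zero[OF tendsto_mult_right_zero[OF T_lim, of "2 * real N"],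
        of Mt], of "\<epsilon> / 4"] e
    by (intro eventually_conj) simp_all
  then obtain K where "L \<le> K" "2 * T K < \<epsilon> / 4" "2 * real N * T K * Mt < \<epsilon> / 4"
    by (auto simp: eventually_sequentially)
  then show ?thesis
    using damped_trunc_approx[OF M fin g e N(1) _ _ N(2,3)] finsupp_damped_trunc L
    unfolding T_def Mt_def by blast
qed

lemma Amax_imp_graph_closure_A:
  assumes M: "sets M = sets (restrict_space borel {-1<..<(1::real)})" and fin: "finite_measure M"
    and g: "dom_Amax M g" and ae: "AE x in M. f x = pseries g x"
  shows "in_graph_closure_A M g f"
proof -
  have g_l2: "l2seq g" and h: "L2fun M (pseries g)"
    using g unfolding dom_Amax_def by auto
  have same_L2dist2: "L2dist2 M F f = L2dist2 M F (pseries g)" for F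
    unfolding L2dist2_def by (rule nn_integral_cong_AE) (use ae in auto)
  have "\<forall>k. \<exists>G. finsupp_seq G \<and> l2dist2 G g < 1 / Suc k \<and> L2dist2 M (pseries G) f < ennreal (1 / Suc k)"
    using finsupp_approx_Amax[OF M fin g_l2 h] unfolding same_L2dist2 by simp
  then obtain G where G: "\<And>k. finsupp_seq (G k)"
    and G_l2: "\<And>k. l2dist2 (G k) g < 1 / Suc k"
    and G_L2: "\<And>k. L2dist2 M (pseries (G k)) f < ennreal (1 / Suc k)"
    by metis
  have lim: "(\<lambda>k. 1 / real (Suc k)) \<longlonglongrightarrow> 0"
    using LIMSEQ_inverse_real_of_nat by (simp add: inverse_eq_divide)
  have "(\<lambda>k. l2dist2 (G k) g) \<longlonglongrightarrow> 0"
    by (rule tendsto_sandwich[OF _ _ tendsto_const lim]) (intro always_eventually allI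
        l2dist2_nonneg[OF finsupp_imp_l2seq[OF G] g_l2] less_imp_le[OF G_l2])+
  moreover have "(\<lambda>k. L2dist2 M (pseries (G k)) f) \<longlonglongrightarrow> 0"
  proof (rule tendsto_sandwich[OF _ _ tendsto_const])
    show "(\<lambda>k. ennreal (1 / Suc k)) \<longlonglongrightarrow> 0"
      using tendsto_ennrealI[OF lim] by simp
  qed (intro always_eventually allI zero_le less_imp_le[OF G_L2])+
  ultimately show ?thesis
    unfolding in_graph_closure_A_def using G by blast
qed

theorem lemma3p3:
  fixes M :: "real measure"
  assumes "sets M = sets (restrict_space borel {-1<..<(1::real)})"
    and "finite_measure M"
  shows "closable_A M \<and>
    (\<forall>g f. l2seq g \<and> L2fun M f \<longrightarrow>
       (in_graph_closure_A M g f \<longleftrightarrow> dom_Amax M g \<and> (AE x in M. f x = pseries g x)))"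
proof
  show "closable_A M"
    unfolding closable_A_def
  proof (intro allI impI)
    fix g f1 f2
    assume "l2seq g \<and> L2fun M f1 \<and> L2fun M f2 \<and> in_graph_closure_A M g f1 \<and> in_graph_closure_A M g f2"
    then have "AE x in M. f1 x = pseries g x" "AE x in M. f2 x = pseries g x"
      using graph_closure_A_imp_Amax[OF assms(1)] by blast+
    then show "AE x in M. f1 x = f2 x"
      by eventually_elim simp
  qed
  show "\<forall>g f. l2seq g \<and> L2fun M f \<longrightarrow>
      (in_graph_closure_A M g f \<longleftrightarrow> dom_Amax M g \<and> (AE x in M. f x = pseries g x))"
    using graph_closure_A_imp_Amax[OF assms(1)] Amax_imp_graph_closure_A[OF assms] by blast
qed

end
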